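(* Let $c,d\in\mathbb{N}$, $I=\mathbb{N}^d\times[c]$, $I_n=[n]^d\times[c]$. Let $\mathfrak{M}=(M_n)_{n\ge1}$ be a $\mathrm{Sym}$-invariant chain of monoids with $M_n\subseteq\mathbb{Z}_{\ge0}^{(I_n)}$ for all $n$, and let $M=\bigcup_{n\ge1}M_n$. Then the following are equivalent: (i) $\mathfrak{M}$ stabilizes (i.e. there is $p\in\mathbb{N}$ with $M_n=\mathbb{Z}_{\ge0}\mathrm{Sym}(n)(M_m)$ for all $n\ge m\ge p$) and $M_n$ is finitely generated for all sufficiently large $n$; (ii) there exist $p\in\mathbb{N}$ and a finite equivariant Hilbert basis $\mathcal{H}_p$ of $M_p$ that is also an equivariant Hilbert basis of $M_n$ for all $n\ge p$; (iii) there exist $q,q'\in\mathbb{N}$ such that for all $n\ge q$: (a) $M_n=M\cap\mathbb{Z}^{(I_n)}$, and (b) $M_n$ has a finite Hilbert basis consisting of elements of support size at most $q'$; (iv) $M$ has a finite equivariant Hilbert basis.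
   Context: $\mathbb{N}=\{1,2,\dots\}$. $\mathbb{Z}^{(I)}$ is the free abelian group with basis $I$, $\mathbb{Z}_{\ge0}^{(I)}$ its nonnegative vectors; $\mathbb{Z}^{(I_n)}\subseteq\mathbb{Z}^{(I)}$ by extension by zero. Support size = number of nonzero entries. For a set $A$, $\mathbb{Z}_{\ge0}A$ is the set of finite $\mathbb{Z}_{\ge0}$-linear combinations of elements of $A$. A Hilbert basis of a monoid $M$ is a minimal generating set (with respect to $\mathbb{Z}_{\ge0}$-combinations). $\mathrm{Sym}(n)$ is the symmetric group on $[n]$, embedded in $\mathrm{Sym}(n+1)$ as stabilizer of $n+1$; $\mathrm{Sym}=\bigcup_n\mathrm{Sym}(n)$ acts on $\mathbb{Z}^{(I)}$ by linear extension of $\sigma(\mathbf{e}_{(i_1,\dots,i_d),j})=\mathbf{e}_{(\sigma(i_1),\dots,\sigma(i_d)),j}$, restricting to $\mathrm{Sym}(n)$ on $\mathbb{Z}^{(I_n)}$; $G(A)=\{\sigma(\mathbf{u})\mid\sigma\in G,\mathbf{u}\in A\}$. A $\mathrm{Sym}$-invariant chain of monoids is $(M_n)_{n\ge1}$ with $M_n\subseteq\mathbb{Z}^{(I_n)}$ a monoid, $M_m\subseteq M_n$ for $m\le n$, each $M_n$ $\mathrm{Sym}(n)$-invariant. $\mathcal{H}\subseteq M_n$ (resp. $\subseteq M$) is an equivariant Hilbert basis if $\mathrm{Sym}(n)(\mathcal{H})$ (resp. $\mathrm{Sym}(\mathcal{H})$) is a Hilbert basis. *)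

theory Defs
  imports "HOL-Combinatorics.Permutations"
begin

text \<open>Indices (i_1,...,i_d, j) are represented as pairs (list of length d, j).
  Vectors of Z^(I) are functions idx => int with finite support inside I.\<close>

type_synonym idx = "nat list \<times> nat"
type_synonym vec = "idx \<Rightarrow> int"

definition supp :: "vec \<Rightarrow> idx set" where
  "supp u = {x. u x \<noteq> 0}"

definition Iset :: "nat \<Rightarrow> nat \<Rightarrow> idx set" where
  "Iset d c = {(is, j). length is = d \<and> set is \<subseteq> {1..} \<and> j \<in> {1..c}}"

definition In :: "nat \<Rightarrow> nat \<Rightarrow> nat \<Rightarrow> idx set" where
  "In d c n = {(is, j). length is = d \<and> set is \<subseteq> {1..n} \<and> j \<in> {1..c}}"

definition ZIn :: "nat \<Rightarrow> nat \<Rightarrow> nat \<Rightarrow> vec set" where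
  "ZIn d c n = {u. supp u \<subseteq> In d c n}"

definition ZIn_nonneg :: "nat \<Rightarrow> nat \<Rightarrow> nat \<Rightarrow> vec set" where
  "ZIn_nonneg d c n = {u. u \<in> ZIn d c n \<and> (\<forall>x. u x \<ge> 0)}"

definition is_monoid :: "vec set \<Rightarrow> bool" where
  "is_monoid M \<longleftrightarrow> (\<lambda>_. 0) \<in> M \<and> (\<forall>u\<in>M. \<forall>v\<in>M. (\<lambda>x. u x + v x) \<in> M)"

definition nncomb :: "vec set \<Rightarrow> vec set" where
  "nncomb A = {(\<lambda>x. \<Sum>a\<in>F. int (k a) * a x) | F k. finite F \<and> F \<subseteq> A}"

definition hilbert_basis :: "vec set \<Rightarrow> vec set \<Rightarrow> bool" where
  "hilbert_basis H M \<longleftrightarrow> H \<subseteq> M \<and> nncomb H = M \<and> (\<forall>H'. H' \<subset> H \<longrightarrow> nncomb H' \<noteq> M)"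

definition finitely_generated :: "vec set \<Rightarrow> bool" where
  "finitely_generated M \<longleftrightarrow> (\<exists>F. finite F \<and> F \<subseteq> M \<and> nncomb F = M)"

definition SymN :: "nat \<Rightarrow> (nat \<Rightarrow> nat) set" where
  "SymN n = {\<sigma>. \<sigma> permutes {1..n}}"

definition SymAll :: "(nat \<Rightarrow> nat) set" where
  "SymAll = (\<Union>n\<in>{1..}. SymN n)"

text \<open>Action: sigma(e_{(i_1..i_d),j}) = e_{(sigma i_1..sigma i_d),j}, extended linearly;
  i.e. (sigma u)(i,j) = u(sigma^{-1} i, j).\<close>
definition act :: "(nat \<Rightarrow> nat) \<Rightarrow> vec \<Rightarrow> vec" where
  "act \<sigma> u = (\<lambda>(is, j). u (map (inv \<sigma>) is, j))"

definition orbit_set :: "(nat \<Rightarrow> nat) set \<Rightarrow> vec set \<Rightarrow> vec set" where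
  "orbit_set G A = {act \<sigma> u | \<sigma> u. \<sigma> \<in> G \<and> u \<in> A}"

definition equiv_hilbert_basis_n :: "nat \<Rightarrow> vec set \<Rightarrow> vec set \<Rightarrow> bool" where
  "equiv_hilbert_basis_n n H M \<longleftrightarrow> H \<subseteq> M \<and> hilbert_basis (orbit_set (SymN n) H) M"

definition equiv_hilbert_basis :: "vec set \<Rightarrow> vec set \<Rightarrow> bool" where
  "equiv_hilbert_basis H M \<longleftrightarrow> H \<subseteq> M \<and> hilbert_basis (orbit_set SymAll H) M"

text \<open>Sym-invariant chain of monoids (M_n)_{n>=1}; values at n = 0 are irrelevant.\<close>
definition sym_inv_chain :: "nat \<Rightarrow> nat \<Rightarrow> (nat \<Rightarrow> vec set) \<Rightarrow> bool" where
  "sym_inv_chain d c M \<longleftrightarrow>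
     (\<forall>n\<ge>1. is_monoid (M n) \<and> M n \<subseteq> ZIn d c n) \<and>
     (\<forall>m n. 1 \<le> m \<and> m \<le> n \<longrightarrow> M m \<subseteq> M n) \<and>
     (\<forall>n\<ge>1. \<forall>\<sigma>\<in>SymN n. \<forall>u\<in>M n. act \<sigma> u \<in> M n)"

definition chain_union :: "(nat \<Rightarrow> vec set) \<Rightarrow> vec set" where
  "chain_union M = (\<Union>n\<in>{1..}. M n)"

end

theory Submission
  imports Defs
begin

(* Every monoid here consists of nonnegative vectors with finite support, so it has a unique
   Hilbert basis: its set of irreducible elements. An equivariant Hilbert basis is therefore a
   set of orbit representatives of the irreducibles, and all four conditions are statements
   about irreducibles. Since u in M_m is irreducible in M_m as soon as it is irreducible in some
   larger M_n, the irreducibles of M are exactly the vectors that are eventually irreducible in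
   M_n, and among finitely many candidates irreducibility eventually stabilizes. Finiteness of the
   orbits is linked to saturation, M_n = M \<inter> Z^(I_n), and to bounded support size by two facts
   about indices: a Sym-translate of a vector in Z^(I_n) that again lies in Z^(I_n) is already a
   Sym(n)-translate, and a vector with support of size s can be permuted into Z^(I_(d s)). *)

section \<open>Nonnegative integer combinations\<close>

lemma nncombI:
  assumes "finite F" "F \<subseteq> A"
  shows "(\<lambda>x. \<Sum>a\<in>F. int (k a) * a x) \<in> nncomb A"
  using assms unfolding nncomb_def by blast

lemma nncombE:
  assumes "u \<in> nncomb A"
  obtains F k where "u = (\<lambda>x. \<Sum>a\<in>F. int (k a) * a x)" "finite F" "F \<subseteq> A"
  using assms unfolding nncomb_def by blast

lemma zero_in_nncomb: "(\<lambda>_. 0) \<in> nncomb A"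
  using nncombI[of "{}" A] by simp

lemma add_in_nncomb:
  assumes "u \<in> nncomb A" "v \<in> nncomb A"
  shows "(\<lambda>x. u x + v x) \<in> nncomb A"
proof -
  obtain F k where u: "u = (\<lambda>x. \<Sum>a\<in>F. int (k a) * a x)" and F: "finite F" "F \<subseteq> A"
    using assms(1) by (rule nncombE)
  obtain G l where v: "v = (\<lambda>x. \<Sum>a\<in>G. int (l a) * a x)" and G: "finite G" "G \<subseteq> A"
    using assms(2) by (rule nncombE)
  define m where "m a = (if a \<in> F then k a else 0) + (if a \<in> G then l a else 0)" for a
  have "u x + v x = (\<Sum>a\<in>F \<union> G. int (m a) * a x)" for x
  proof -
    have "u x = (\<Sum>a\<in>F \<union> G. if a \<in> F then int (k a) * a x else 0)"
      using F G by (simp add: u sum.If_cases Int_absorb1)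
    moreover have "v x = (\<Sum>a\<in>F \<union> G. if a \<in> G then int (l a) * a x else 0)"
      using F G by (simp add: v sum.If_cases Int_absorb1)
    moreover have "int (m a) * a x = (if a \<in> F then int (k a) * a x else 0)
        + (if a \<in> G then int (l a) * a x else 0)" for a
      by (simp add: m_def distrib_right)
    ultimately show ?thesis by (simp add: sum.distrib)
  qed
  then show ?thesis using nncombI[of "F \<union> G" A m] F G by simp
qed

lemma is_monoid_nncomb: "is_monoid (nncomb A)"
  unfolding is_monoid_def using zero_in_nncomb add_in_nncomb by blast

lemma subset_nncomb: "A \<subseteq> nncomb A"
proof
  fix a assume "a \<in> A"
  then show "a \<in> nncomb A" using nncombI[of "{a}" A "\<lambda>_. 1"] by simp
qed

lemma nncomb_mono: "A \<subseteq> B \<Longrightarrow> nncomb A \<subseteq> nncomb B"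
  unfolding nncomb_def by blast

lemma monoid_scale_closed:
  assumes "is_monoid N" "u \<in> N"
  shows "(\<lambda>x. int k * u x) \<in> N"
proof (induction k)
  case 0
  then show ?case using assms by (simp add: is_monoid_def)
next
  case (Suc k)
  have "(\<lambda>x. int (Suc k) * u x) = (\<lambda>x. u x + int k * u x)" by (simp add: algebra_simps)
  then show ?case using Suc assms unfolding is_monoid_def by metis
qed

lemma nncomb_subset_monoid:
  assumes "is_monoid N" "A \<subseteq> N"
  shows "nncomb A \<subseteq> N"
proof
  fix u assume "u \<in> nncomb A"
  then obtain F k where u: "u = (\<lambda>x. \<Sum>a\<in>F. int (k a) * a x)" and F: "finite F" "F \<subseteq> A"
    by (rule nncombE)
  from F have "(\<lambda>x. \<Sum>a\<in>F. int (k a) * a x) \<in> N"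
  proof (induction F rule: finite_induct)
    case empty
    then show ?case using assms by (simp add: is_monoid_def)
  next
    case (insert a F)
    have "(\<lambda>x. int (k a) * a x) \<in> N" using monoid_scale_closed assms insert by blast
    then show ?case using insert assms unfolding is_monoid_def by auto
  qed
  then show "u \<in> N" using u by simp
qed

lemma nncomb_idem: "nncomb (nncomb A) = nncomb A"
  using nncomb_subset_monoid[OF is_monoid_nncomb order_refl] subset_nncomb by blast

lemma nncomb_restrict_supp:
  assumes "\<forall>a\<in>A. \<forall>x. a x \<ge> 0" "u \<in> nncomb A"
  shows "u \<in> nncomb {a \<in> A. supp a \<subseteq> supp u}"
proof -
  obtain F k where u: "u = (\<lambda>x. \<Sum>a\<in>F. int (k a) * a x)" and F: "finite F" "F \<subseteq> A"
    using assms(2) by (rule nncombE)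
  define F' where "F' = {a \<in> F. k a > 0}"
  have fin: "finite F'" using F(1) unfolding F'_def by simp
  have u': "u = (\<lambda>x. \<Sum>a\<in>F'. int (k a) * a x)"
    unfolding u F'_def using F(1) by (intro ext sum.mono_neutral_right) auto
  have "supp a \<subseteq> supp u" if a: "a \<in> F'" for a
  proof
    fix x assume x: "x \<in> supp a"
    have nonneg: "0 \<le> int (k b) * b x" if "b \<in> F'" for b
    proof -
      have "b \<in> A" using that F(2) unfolding F'_def by blast
      then have "b x \<ge> 0" using assms(1) by blast
      then show ?thesis by simp
    qed
    have "0 < int (k a) * a x"
      using a x nonneg[OF a] unfolding F'_def supp_def
      by (auto simp: zero_less_mult_iff zero_le_mult_iff)
    also have "\<dots> \<le> (\<Sum>b\<in>F'. int (k b) * b x)"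
      by (rule member_le_sum[OF a _ fin]) (use nonneg in blast)
    also have "\<dots> = u x" unfolding u' by simp
    finally show "x \<in> supp u" by (simp add: supp_def)
  qed
  then have "F' \<subseteq> {a \<in> A. supp a \<subseteq> supp u}" using F(2) unfolding F'_def by blast
  from nncombI[OF fin this, of k] show ?thesis unfolding u' .
qed

section \<open>Irreducible elements of positive monoids\<close>

definition positive_monoid :: "vec set \<Rightarrow> bool" where
  "positive_monoid M \<longleftrightarrow> is_monoid M \<and> (\<forall>u\<in>M. finite (supp u) \<and> (\<forall>x. u x \<ge> 0))"

definition irreducibles :: "vec set \<Rightarrow> vec set" where
  "irreducibles M = {u \<in> M. u \<noteq> (\<lambda>_. 0) \<and>
     (\<forall>v\<in>M. \<forall>w\<in>M. u = (\<lambda>x. v x + w x) \<longrightarrow> v = (\<lambda>_. 0) \<or> w = (\<lambda>_. 0))}"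

definition weight :: "vec \<Rightarrow> int" where
  "weight u = sum u (supp u)"

lemma supp_add_nonneg:
  assumes "\<forall>x. u x \<ge> 0" "\<forall>x. v x \<ge> 0"
  shows "supp (\<lambda>x. u x + v x) = supp u \<union> supp v"
  using assms by (auto simp: supp_def add_nonneg_eq_0_iff)

lemma weight_add:
  assumes "\<forall>x. u x \<ge> 0" "\<forall>x. v x \<ge> 0" "finite (supp u)" "finite (supp v)"
  shows "weight (\<lambda>x. u x + v x) = weight u + weight v"
proof -
  let ?S = "supp u \<union> supp v"
  have "weight u = sum u ?S" "weight v = sum v ?S"
    unfolding weight_def using assms(3,4) by (auto intro: sum.mono_neutral_left simp: supp_def)
  then show ?thesis
    unfolding weight_def supp_add_nonneg[OF assms(1,2)] by (simp add: sum.distrib)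
qed

lemma weight_pos:
  assumes "\<forall>x. u x \<ge> 0" "finite (supp u)" "u \<noteq> (\<lambda>_. 0)"
  shows "weight u > 0"
proof -
  obtain y where "u y \<noteq> 0" using assms(3) by (metis ext)
  moreover have "u y \<ge> 0" using assms(1) by blast
  ultimately have "y \<in> supp u" "u y > 0" by (auto simp: supp_def)
  then show ?thesis unfolding weight_def using assms(1,2) by (intro sum_pos2) auto
qed

lemma irreducibles_subset: "irreducibles M \<subseteq> M"
  unfolding irreducibles_def by auto

lemma irreducible_in_subset:
  assumes "N \<subseteq> M" "u \<in> N" "u \<in> irreducibles M"
  shows "u \<in> irreducibles N"
  using assms unfolding irreducibles_def by blast

text \<open>Induction on the weight: a reducible element splits into two nonzero
  summands of strictly smaller weight.\<close>
lemma subset_nncomb_irreducibles: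
  assumes "positive_monoid M"
  shows "M \<subseteq> nncomb (irreducibles M)"
proof
  fix u assume "u \<in> M"
  then show "u \<in> nncomb (irreducibles M)"
  proof (induction "nat (weight u)" arbitrary: u rule: less_induct)
    case (less u)
    have pos: "\<forall>x. w x \<ge> 0" "finite (supp w)" if "w \<in> M" for w
      using assms that unfolding positive_monoid_def by auto
    consider "u = (\<lambda>_. 0)" | "u \<in> irreducibles M"
      | v w where "v \<in> M" "w \<in> M" "u = (\<lambda>x. v x + w x)" "v \<noteq> (\<lambda>_. 0)" "w \<noteq> (\<lambda>_. 0)"
      using less.prems unfolding irreducibles_def by blast
    then show ?case
    proof cases
      case 1
      then show ?thesis using zero_in_nncomb by simp
    next
      case 2
      then show ?thesis using subset_nncomb by blast
    next
      case (3 v w)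
      have "weight u = weight v + weight w"
        using 3 pos weight_add by simp
      moreover have "weight v > 0" "weight w > 0"
        using 3 pos weight_pos by auto
      ultimately have "nat (weight v) < nat (weight u)" "nat (weight w) < nat (weight u)"
        by linarith+
      then have "v \<in> nncomb (irreducibles M)" "w \<in> nncomb (irreducibles M)"
        using less.hyps 3(1,2) by blast+
      then show ?thesis using 3 add_in_nncomb by simp
    qed
  qed
qed

lemma nncomb_irreducibles:
  assumes "positive_monoid M"
  shows "nncomb (irreducibles M) = M"
  using subset_nncomb_irreducibles[OF assms] nncomb_subset_monoid[OF _ irreducibles_subset] assms
  unfolding positive_monoid_def by blast

lemma irreducibles_subset_generators:
  assumes "H \<subseteq> M" "nncomb H = M"
  shows "irreducibles M \<subseteq> H"
proof
  fix u assume u: "u \<in> irreducibles M"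
  then have "u \<in> nncomb H" using assms unfolding irreducibles_def by auto
  then obtain F k where u_eq: "u = (\<lambda>x. \<Sum>a\<in>F. int (k a) * a x)" and F: "finite F" "F \<subseteq> H"
    by (rule nncombE)
  have "\<exists>a\<in>F. k a > 0 \<and> a \<noteq> (\<lambda>_. 0)"
  proof (rule ccontr)
    assume "\<not> (\<exists>a\<in>F. k a > 0 \<and> a \<noteq> (\<lambda>_. 0))"
    then have "u = (\<lambda>_. 0)" unfolding u_eq by (intro ext sum.neutral) auto
    then show False using u unfolding irreducibles_def by auto
  qed
  then obtain a where a: "a \<in> F" "k a > 0" "a \<noteq> (\<lambda>_. 0)" by blast
  define v where "v = (\<lambda>x. \<Sum>b\<in>F. int ((k(a := k a - 1)) b) * b x)"
  have "v \<in> M" using nncombI[of F H] assms F unfolding v_def by simp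
  moreover have "a \<in> M" using a F assms by auto
  moreover have u_split: "u = (\<lambda>x. a x + v x)"
  proof
    fix x
    have "u x = int (k a) * a x + (\<Sum>b\<in>F - {a}. int (k b) * b x)"
      using u_eq F a by (simp add: sum.remove)
    moreover have "v x = (int (k a) - 1) * a x + (\<Sum>b\<in>F - {a}. int (k b) * b x)"
      unfolding v_def using F a by (simp add: sum.remove of_nat_diff)
    ultimately show "u x = a x + v x" by (simp add: algebra_simps)
  qed
  ultimately have "a = (\<lambda>_. 0) \<or> v = (\<lambda>_. 0)" using u unfolding irreducibles_def by blast
  then have "v = (\<lambda>_. 0)" using a(3) by blast
  then have "u = a" using u_split by simp
  then show "u \<in> H" using a F by auto
qed

lemma hilbert_basis_iff_irreducibles:
  assumes "positive_monoid M"
  shows "hilbert_basis H M \<longleftrightarrow> H = irreducibles M"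
proof
  assume hb: "hilbert_basis H M"
  then have gen: "H \<subseteq> M" "nncomb H = M" unfolding hilbert_basis_def by auto
  have "irreducibles M \<subseteq> H" using irreducibles_subset_generators gen by blast
  moreover have "\<not> irreducibles M \<subset> H"
    using hb nncomb_irreducibles[OF assms] unfolding hilbert_basis_def by blast
  ultimately show "H = irreducibles M" by blast
next
  assume H: "H = irreducibles M"
  have "nncomb H' \<noteq> M" if "H' \<subset> H" for H'
    using that irreducibles_subset_generators[of H' M] irreducibles_subset[of M] H by blast
  then show "hilbert_basis H M"
    unfolding hilbert_basis_def using nncomb_irreducibles[OF assms] irreducibles_subset H by blast
qed

section \<open>The action of the symmetric groups\<close>

lemma act_apply: "act \<sigma> u (xs, j) = u (map (inv \<sigma>) xs, j)"
  by (simp add: act_def)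

lemma act_inv_act: "bij \<sigma> \<Longrightarrow> act (inv \<sigma>) (act \<sigma> u) = u"
  by (auto simp: act_def fun_eq_iff inv_inv_eq bij_is_inj comp_def)

lemma act_add: "act \<sigma> (\<lambda>x. u x + v x) = (\<lambda>x. act \<sigma> u x + act \<sigma> v x)"
  by (auto simp: act_def fun_eq_iff)

lemma act_zero: "act \<sigma> (\<lambda>_. 0) = (\<lambda>_. 0)"
  by (auto simp: act_def fun_eq_iff)

lemma act_eq_zero_iff: "bij \<sigma> \<Longrightarrow> act \<sigma> u = (\<lambda>_. 0) \<longleftrightarrow> u = (\<lambda>_. 0)"
  using act_inv_act act_zero by metis

lemma act_irreducible:
  assumes "bij \<sigma>" and "\<And>u. u \<in> M \<Longrightarrow> act \<sigma> u \<in> M" "\<And>u. u \<in> M \<Longrightarrow> act (inv \<sigma>) u \<in> M"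
    and u: "u \<in> irreducibles M"
  shows "act \<sigma> u \<in> irreducibles M"
proof -
  have "v = (\<lambda>_. 0) \<or> w = (\<lambda>_. 0)"
    if "v \<in> M" "w \<in> M" "act \<sigma> u = (\<lambda>x. v x + w x)" for v w
  proof -
    have "u = (\<lambda>x. act (inv \<sigma>) v x + act (inv \<sigma>) w x)"
      using that(3) act_add act_inv_act[OF assms(1)] by metis
    then have "act (inv \<sigma>) v = (\<lambda>_. 0) \<or> act (inv \<sigma>) w = (\<lambda>_. 0)"
      using u assms(3) that(1,2) unfolding irreducibles_def by blast
    then show ?thesis using act_eq_zero_iff[OF bij_imp_bij_inv[OF assms(1)]] by blast
  qed
  moreover have "act \<sigma> u \<noteq> (\<lambda>_. 0)"
    using u act_eq_zero_iff[OF assms(1)] unfolding irreducibles_def by blast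
  ultimately show ?thesis using u assms(2) unfolding irreducibles_def by blast
qed

lemma act_in_nncomb: "u \<in> nncomb A \<Longrightarrow> act \<sigma> u \<in> nncomb (act \<sigma> ` A)"
proof -
  assume u: "u \<in> nncomb A"
  have "is_monoid {u. act \<sigma> u \<in> nncomb (act \<sigma> ` A)}"
    unfolding is_monoid_def using act_zero act_add zero_in_nncomb add_in_nncomb by auto
  moreover have "A \<subseteq> {u. act \<sigma> u \<in> nncomb (act \<sigma> ` A)}"
    using subset_nncomb by blast
  ultimately show ?thesis using nncomb_subset_monoid u by blast
qed

lemma nncomb_orbit_set_nncomb: "nncomb (orbit_set G (nncomb A)) = nncomb (orbit_set G A)"
proof
  have "orbit_set G (nncomb A) \<subseteq> nncomb (orbit_set G A)"
  proof
    fix v assume "v \<in> orbit_set G (nncomb A)"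
    then obtain \<sigma> u where v: "v = act \<sigma> u" "\<sigma> \<in> G" "u \<in> nncomb A"
      unfolding orbit_set_def by blast
    have "act \<sigma> ` A \<subseteq> orbit_set G A" using v(2) unfolding orbit_set_def by blast
    then show "v \<in> nncomb (orbit_set G A)"
      using act_in_nncomb[OF v(3)] nncomb_mono v(1) by blast
  qed
  then show "nncomb (orbit_set G (nncomb A)) \<subseteq> nncomb (orbit_set G A)"
    using nncomb_mono nncomb_idem by metis
  show "nncomb (orbit_set G A) \<subseteq> nncomb (orbit_set G (nncomb A))"
    using subset_nncomb by (intro nncomb_mono) (auto simp: orbit_set_def)
qed

lemma finite_orbit_set: "finite G \<Longrightarrow> finite A \<Longrightarrow> finite (orbit_set G A)"
proof -
  assume "finite G" "finite A"
  moreover have "orbit_set G A = (\<lambda>(\<sigma>, u). act \<sigma> u) ` (G \<times> A)"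
    unfolding orbit_set_def by auto
  ultimately show ?thesis by simp
qed

lemma supp_act: "bij \<sigma> \<Longrightarrow> supp (act \<sigma> u) = (\<lambda>(xs, j). (map \<sigma> xs, j)) ` supp u"
proof -
  assume b: "bij \<sigma>"
  have inv1: "map (inv \<sigma>) (map \<sigma> xs) = xs" for xs
    using b by (simp add: comp_def bij_is_inj)
  have inv2: "map \<sigma> (map (inv \<sigma>) xs) = xs" for xs
    using b by (simp add: comp_def bij_is_surj surj_f_inv_f)
  show ?thesis
  proof (intro set_eqI iffI)
    fix p assume p: "p \<in> supp (act \<sigma> u)"
    obtain xs j where xs: "p = (xs, j)" by fastforce
    then have "(map (inv \<sigma>) xs, j) \<in> supp u" using p by (simp add: supp_def act_apply)
    moreover have "p = (\<lambda>(xs, j). (map \<sigma> xs, j)) (map (inv \<sigma>) xs, j)" using xs inv2 by simp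
    ultimately show "p \<in> (\<lambda>(xs, j). (map \<sigma> xs, j)) ` supp u" by blast
  next
    fix p assume "p \<in> (\<lambda>(xs, j). (map \<sigma> xs, j)) ` supp u"
    then show "p \<in> supp (act \<sigma> u)" using inv1 by (auto simp: supp_def act_apply)
  qed
qed

lemma card_supp_act: "bij \<sigma> \<Longrightarrow> card (supp (act \<sigma> u)) = card (supp u)"
proof -
  assume "bij \<sigma>"
  moreover have "inj_on (\<lambda>(xs, j). (map \<sigma> xs, j)) (supp u)"
    using bij_is_inj[OF \<open>bij \<sigma>\<close>] by (auto simp: inj_on_def)
  ultimately show ?thesis using supp_act card_image by metis
qed

definition indices :: "vec \<Rightarrow> nat set" where
  "indices u = (\<Union>(xs, j)\<in>supp u. set xs)"

lemma set_subset_indices: "(xs, j) \<in> supp u \<Longrightarrow> set xs \<subseteq> indices u"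
  unfolding indices_def by blast

lemma indices_act: "bij \<sigma> \<Longrightarrow> indices (act \<sigma> u) = \<sigma> ` indices u"
  unfolding indices_def by (simp add: supp_act image_image image_UN case_prod_unfold)

lemma act_cong_indices:
  assumes "bij \<sigma>" "bij \<tau>" "\<forall>e\<in>indices h. \<tau> e = \<sigma> e"
  shows "act \<tau> h = act \<sigma> h"
proof (rule ext, clarify)
  fix xs j
  show "act \<tau> h (xs, j) = act \<sigma> h (xs, j)"
  proof (cases "set xs \<subseteq> \<sigma> ` indices h")
    case True
    have "map (inv \<tau>) xs = map (inv \<sigma>) xs"
    proof (rule map_cong[OF refl])
      fix e assume "e \<in> set xs"
      then obtain s where "s \<in> indices h" "e = \<sigma> s" "\<tau> s = e" using True assms(3) by auto
      then show "inv \<tau> e = inv \<sigma> e" using assms(1,2) by (metis bij_is_inj inv_f_f)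
    qed
    then show ?thesis by (simp only: act_apply)
  next
    case False
    have "(xs, j) \<notin> supp (act \<rho> h)" if "bij \<rho>" "\<rho> ` indices h = \<sigma> ` indices h" for \<rho>
      using that False set_subset_indices indices_act by metis
    moreover have "\<tau> ` indices h = \<sigma> ` indices h" using assms(3) by (auto simp: image_def)
    ultimately show ?thesis using assms(1,2) by (simp add: supp_def)
  qed
qed

lemma permutes_extend:
  assumes "finite B" "A \<subseteq> B" "inj_on f A" "f ` A \<subseteq> B"
  obtains \<tau> where "\<tau> permutes B" "\<forall>x\<in>A. \<tau> x = f x"
proof -
  have "finite A" using assms finite_subset by blast
  then have "card (B - A) = card (B - f ` A)"
    using assms by (simp add: card_Diff_subset card_image)
  then obtain g where g: "bij_betw g (B - A) (B - f ` A)"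
    using finite_same_card_bij assms by (meson finite_Diff)
  define \<tau> where "\<tau> x = (if x \<in> A then f x else if x \<in> B then g x else x)" for x
  have "bij_betw \<tau> A (f ` A)"
    using assms(3) unfolding \<tau>_def bij_betw_def inj_on_def by auto
  moreover have "bij_betw \<tau> (B - A) (B - f ` A)"
    using g by (rule bij_betw_cong[THEN iffD1, rotated]) (auto simp: \<tau>_def)
  ultimately have "bij_betw \<tau> (A \<union> (B - A)) (f ` A \<union> (B - f ` A))"
    by (rule bij_betw_combine) auto
  moreover have "A \<union> (B - A) = B" "f ` A \<union> (B - f ` A) = B" using assms by auto
  ultimately have "\<tau> permutes B"
    by (intro bij_imp_permutes) (auto simp: \<tau>_def)
  then show ?thesis using that unfolding \<tau>_def by auto
qed

lemma orbit_set_mono: "A \<subseteq> B \<Longrightarrow> orbit_set G A \<subseteq> orbit_set G B"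
  unfolding orbit_set_def by blast

lemma SymN_bij: "\<sigma> \<in> SymN n \<Longrightarrow> bij \<sigma>"
  unfolding SymN_def using permutes_bij by blast

lemma SymN_inv: "\<sigma> \<in> SymN n \<Longrightarrow> inv \<sigma> \<in> SymN n"
  unfolding SymN_def using permutes_inv by blast

lemma SymN_mono: "m \<le> n \<Longrightarrow> SymN m \<subseteq> SymN n"
  unfolding SymN_def using permutes_subset[of _ "{1..m}" "{1..n}"] by auto

lemma finite_SymN: "finite (SymN n)"
  unfolding SymN_def using finite_permutations[of "{1..n}"] by simp

lemma SymAll_iff: "\<sigma> \<in> SymAll \<longleftrightarrow> (\<exists>n\<ge>1. \<sigma> \<in> SymN n)"
  unfolding SymAll_def by auto

lemma SymN_subset_SymAll: "SymN n \<subseteq> SymAll"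
proof
  fix \<sigma> assume "\<sigma> \<in> SymN n"
  then have "\<sigma> \<in> SymN (max n 1)" using SymN_mono[of n "max n 1"] by auto
  then show "\<sigma> \<in> SymAll" unfolding SymAll_iff by (intro exI[of _ "max n 1"]) auto
qed

lemma SymAll_bij: "\<sigma> \<in> SymAll \<Longrightarrow> bij \<sigma>"
  using SymAll_iff SymN_bij by blast

lemma SymAll_inv: "\<sigma> \<in> SymAll \<Longrightarrow> inv \<sigma> \<in> SymAll"
  using SymAll_iff SymN_inv by blast

lemma finite_In: "finite (In d c n)"
proof -
  have "In d c n \<subseteq> {xs. set xs \<subseteq> {1..n} \<and> length xs = d} \<times> {1..c}"
    unfolding In_def by auto
  then show ?thesis using finite_lists_length_eq[of "{1..n}" d] finite_subset by blast
qed

lemma finite_supp_ZIn: "u \<in> ZIn d c n \<Longrightarrow> finite (supp u)"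
  unfolding ZIn_def using finite_In finite_subset by blast

lemma indices_subset_ZIn: "u \<in> ZIn d c n \<Longrightarrow> indices u \<subseteq> {1..n}"
  unfolding ZIn_def In_def indices_def by blast

lemma act_in_ZIn:
  assumes "u \<in> ZIn d c n" "bij \<tau>" "\<tau> ` indices u \<subseteq> {1..r}"
  shows "act \<tau> u \<in> ZIn d c r"
  unfolding ZIn_def mem_Collect_eq
proof
  fix p assume "p \<in> supp (act \<tau> u)"
  then obtain xs j where p: "p = (map \<tau> xs, j)" "(xs, j) \<in> supp u"
    using supp_act[OF assms(2)] by auto
  then have "length xs = d" "j \<in> {1..c}" using assms(1) unfolding ZIn_def In_def by auto
  moreover have "set (map \<tau> xs) \<subseteq> {1..r}" using set_subset_indices[OF p(2)] assms(3) by auto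
  ultimately show "p \<in> In d c r" unfolding In_def p(1) by auto
qed

lemma act_SymN_ZIn:
  assumes "\<sigma> \<in> SymN n" "u \<in> ZIn d c n"
  shows "act \<sigma> u \<in> ZIn d c n"
proof -
  have \<sigma>: "\<sigma> permutes {1..n}" using assms(1) unfolding SymN_def by simp
  have "\<sigma> ` indices u \<subseteq> {1..n}"
    using image_mono[OF indices_subset_ZIn[OF assms(2)], of \<sigma>] permutes_image[OF \<sigma>] by simp
  then show ?thesis using act_in_ZIn[OF assms(2) permutes_bij[OF \<sigma>]] by blast
qed

text \<open>Only the values of a permutation on the indices occurring in u matter, so a
  permutation moving u inside I_n can be replaced by one fixing everything outside [n].\<close>
lemma SymN_act_eq_SymAll_act:
  assumes "u \<in> ZIn d c n" "\<sigma> \<in> SymAll" "act \<sigma> u \<in> ZIn d c n"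
  obtains \<tau> where "\<tau> \<in> SymN n" "act \<tau> u = act \<sigma> u"
proof -
  have b: "bij \<sigma>" using assms(2) SymAll_bij by blast
  have "\<sigma> ` indices u \<subseteq> {1..n}"
    using indices_subset_ZIn[OF assms(3)] indices_act[OF b] by simp
  moreover have "inj_on \<sigma> (indices u)" using b bij_is_inj inj_on_subset by blast
  ultimately obtain \<tau> where \<tau>: "\<tau> permutes {1..n}" "\<forall>e\<in>indices u. \<tau> e = \<sigma> e"
    using permutes_extend[OF finite_atLeastAtMost indices_subset_ZIn[OF assms(1)]] by metis
  then have "act \<tau> u = act \<sigma> u" using act_cong_indices[OF b permutes_bij] by blast
  then show ?thesis using that \<tau>(1) unfolding SymN_def by blast
qed

lemma orbit_set_SymN_eq:
  assumes "H \<subseteq> ZIn d c n"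
  shows "orbit_set (SymN n) H = orbit_set SymAll H \<inter> ZIn d c n"
proof
  show "orbit_set (SymN n) H \<subseteq> orbit_set SymAll H \<inter> ZIn d c n"
  proof
    fix v assume "v \<in> orbit_set (SymN n) H"
    then obtain \<sigma> h where v: "v = act \<sigma> h" "\<sigma> \<in> SymN n" "h \<in> H"
      unfolding orbit_set_def by blast
    then have "v \<in> ZIn d c n" using act_SymN_ZIn assms by blast
    moreover have "v \<in> orbit_set SymAll H"
      using v SymN_subset_SymAll unfolding orbit_set_def by blast
    ultimately show "v \<in> orbit_set SymAll H \<inter> ZIn d c n" by blast
  qed
  show "orbit_set SymAll H \<inter> ZIn d c n \<subseteq> orbit_set (SymN n) H"
  proof
    fix v assume "v \<in> orbit_set SymAll H \<inter> ZIn d c n"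
    then obtain \<sigma> h where v: "v = act \<sigma> h" "\<sigma> \<in> SymAll" "h \<in> H" "act \<sigma> h \<in> ZIn d c n"
      unfolding orbit_set_def by blast
    moreover obtain \<tau> where "\<tau> \<in> SymN n" "act \<tau> h = act \<sigma> h"
      using SymN_act_eq_SymAll_act v(2-4) assms by blast
    ultimately have "v = act \<tau> h \<and> \<tau> \<in> SymN n \<and> h \<in> H" by simp
    then show "v \<in> orbit_set (SymN n) H" unfolding orbit_set_def by blast
  qed
qed

lemma card_indices_le: "u \<in> ZIn d c n \<Longrightarrow> card (indices u) \<le> d * card (supp u)"
proof -
  assume u: "u \<in> ZIn d c n"
  have "card (indices u) \<le> (\<Sum>p\<in>supp u. card (set (fst p)))"
    unfolding indices_def case_prod_unfold using finite_supp_ZIn[OF u] card_UN_le by blast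
  also have "\<dots> \<le> (\<Sum>p\<in>supp u. d)"
  proof (rule sum_mono)
    fix p assume "p \<in> supp u"
    then have "length (fst p) = d" using u unfolding ZIn_def In_def by auto
    then show "card (set (fst p)) \<le> d" using card_length by metis
  qed
  finally show ?thesis by (simp add: mult.commute)
qed

lemma SymN_act_into_ZIn:
  assumes "u \<in> ZIn d c n" "d * card (supp u) \<le> r"
  obtains \<tau> where "\<tau> \<in> SymN (max n r)" "act \<tau> u \<in> ZIn d c r"
proof -
  have fin: "finite (indices u)" using indices_subset_ZIn[OF assms(1)] finite_subset by blast
  have "card (indices u) \<le> card {1..r}" using card_indices_le[OF assms(1)] assms(2) by simp
  then obtain f where f: "f ` indices u \<subseteq> {1..r}" "inj_on f (indices u)"
    using card_le_inj[OF fin, of "{1..r}"] by auto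
  have "indices u \<subseteq> {1..max n r}" "f ` indices u \<subseteq> {1..max n r}"
    using indices_subset_ZIn[OF assms(1)] f(1) by fastforce+
  then obtain \<tau> where \<tau>: "\<tau> permutes {1..max n r}" "\<forall>e\<in>indices u. \<tau> e = f e"
    using permutes_extend[OF finite_atLeastAtMost _ f(2)] by metis
  have "\<tau> ` indices u \<subseteq> {1..r}" using \<tau>(2) f(1) by auto
  then have "act \<tau> u \<in> ZIn d c r" using act_in_ZIn[OF assms(1) permutes_bij[OF \<tau>(1)]] by blast
  then show ?thesis using that \<tau>(1) unfolding SymN_def by blast
qed

lemma mem_orbit_set_SymAll_iff:
  "v \<in> orbit_set SymAll H \<longleftrightarrow> (\<forall>\<^sub>F n in sequentially. v \<in> orbit_set (SymN n) H)"
  unfolding eventually_sequentially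
proof
  assume "v \<in> orbit_set SymAll H"
  then obtain \<sigma> h m where "v = act \<sigma> h" "\<sigma> \<in> SymN m" "h \<in> H"
    unfolding orbit_set_def SymAll_iff by blast
  then have "v \<in> orbit_set (SymN n) H" if "n \<ge> m" for n
    using SymN_mono[OF that] unfolding orbit_set_def by blast
  then show "\<exists>N. \<forall>n\<ge>N. v \<in> orbit_set (SymN n) H" by blast
next
  assume "\<exists>N. \<forall>n\<ge>N. v \<in> orbit_set (SymN n) H"
  then obtain n where "v \<in> orbit_set (SymN n) H" by blast
  then show "v \<in> orbit_set SymAll H"
    using SymN_subset_SymAll unfolding orbit_set_def by blast
qed

section \<open>Invariant chains of monoids\<close>

lemma antimono_stabilizes:
  fixes S :: "nat \<Rightarrow> 'a set"
  assumes "finite A" "\<forall>n\<ge>N. S n \<subseteq> A" "\<forall>m n. N \<le> m \<and> m \<le> n \<longrightarrow> S n \<subseteq> S m"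
  obtains p where "p \<ge> N" "\<forall>n\<ge>p. S n = S p"
proof -
  have "\<exists>p. N \<le> p \<and> (\<forall>n. N \<le> n \<longrightarrow> card (S p) \<le> card (S n))"
    using ex_has_least_nat[of "\<lambda>n. n \<ge> N" N "\<lambda>n. card (S n)"] by simp
  then obtain p where p: "p \<ge> N" "\<forall>n\<ge>N. card (S p) \<le> card (S n)" by blast
  have "S n = S p" if "n \<ge> p" for n
  proof (rule card_subset_eq)
    show "finite (S p)" using assms(1,2) p(1) finite_subset by blast
    show "S n \<subseteq> S p" using assms(3) p(1) that by blast
    show "card (S n) = card (S p)"
      using p(2) p(1) that card_mono[OF \<open>finite (S p)\<close> \<open>S n \<subseteq> S p\<close>]
      by (meson le_antisym order.trans)
  qed
  then show ?thesis using that p(1) by blast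
qed

locale sym_chain =
  fixes d c :: nat and M :: "nat \<Rightarrow> vec set"
  assumes chain: "sym_inv_chain d c M"
    and nonneg: "\<forall>n\<ge>1. M n \<subseteq> ZIn_nonneg d c n"
begin

abbreviation Mu :: "vec set" where
  "Mu \<equiv> chain_union M"

lemma is_monoid_M: "n \<ge> 1 \<Longrightarrow> is_monoid (M n)"
  using chain unfolding sym_inv_chain_def by auto

lemma M_mono: "1 \<le> m \<Longrightarrow> m \<le> n \<Longrightarrow> M m \<subseteq> M n"
  using chain unfolding sym_inv_chain_def by auto

lemma act_M: "n \<ge> 1 \<Longrightarrow> \<sigma> \<in> SymN n \<Longrightarrow> u \<in> M n \<Longrightarrow> act \<sigma> u \<in> M n"
  using chain unfolding sym_inv_chain_def by auto

lemma M_subset_ZIn: "n \<ge> 1 \<Longrightarrow> M n \<subseteq> ZIn d c n"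
  using chain unfolding sym_inv_chain_def by auto

lemma positive_monoid_M: "n \<ge> 1 \<Longrightarrow> positive_monoid (M n)"
  using is_monoid_M nonneg M_subset_ZIn finite_supp_ZIn
  unfolding positive_monoid_def ZIn_nonneg_def by blast

lemma orbit_set_subset_M: "n \<ge> 1 \<Longrightarrow> A \<subseteq> M n \<Longrightarrow> orbit_set (SymN n) A \<subseteq> M n"
  unfolding orbit_set_def using act_M by blast

lemma M_subset_Mu: "n \<ge> 1 \<Longrightarrow> M n \<subseteq> Mu"
  unfolding chain_union_def by auto

lemma Mu_eventually_M: "u \<in> Mu \<Longrightarrow> \<forall>\<^sub>F n in sequentially. u \<in> M n"
proof -
  assume "u \<in> Mu"
  then obtain m where "m \<ge> 1" "u \<in> M m" unfolding chain_union_def by auto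
  then show ?thesis unfolding eventually_sequentially using M_mono by blast
qed

lemma finite_subset_Mu_eventually_M:
  "finite H \<Longrightarrow> H \<subseteq> Mu \<Longrightarrow> \<forall>\<^sub>F n in sequentially. H \<subseteq> M n"
  using eventually_ball_finite[of H "\<lambda>n u. u \<in> M n" sequentially] Mu_eventually_M
  by (auto simp: subset_eq)

lemma positive_monoid_Mu: "positive_monoid Mu"
proof -
  have "(\<lambda>_. 0) \<in> Mu"
    using is_monoid_M[of 1] M_subset_Mu[of 1] unfolding is_monoid_def by auto
  moreover have "(\<lambda>x. u x + v x) \<in> Mu" if "u \<in> Mu" "v \<in> Mu" for u v
  proof -
    have "\<forall>\<^sub>F n in sequentially. n \<ge> 1 \<and> {u, v} \<subseteq> M n"
      using finite_subset_Mu_eventually_M[of "{u, v}"] that by (auto intro: eventually_conj)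
    then obtain n where "n \<ge> 1" "{u, v} \<subseteq> M n" unfolding eventually_sequentially by blast
    then show ?thesis using is_monoid_M[of n] M_subset_Mu[of n] unfolding is_monoid_def by auto
  qed
  moreover have "finite (supp u) \<and> (\<forall>x. u x \<ge> 0)" if u: "u \<in> Mu" for u
  proof -
    obtain n where "n \<ge> 1" "u \<in> M n" using u unfolding chain_union_def by auto
    then show ?thesis using positive_monoid_M unfolding positive_monoid_def by blast
  qed
  ultimately show ?thesis unfolding positive_monoid_def is_monoid_def by blast
qed

lemma act_Mu:
  assumes "\<sigma> \<in> SymAll" "u \<in> Mu"
  shows "act \<sigma> u \<in> Mu"
proof -
  obtain m where "m \<ge> 1" "\<sigma> \<in> SymN m" using assms(1) SymAll_iff by blast
  moreover have "\<forall>\<^sub>F n in sequentially. n \<ge> m \<and> u \<in> M n"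
    using Mu_eventually_M[OF assms(2)] by (auto intro: eventually_conj)
  ultimately obtain n where "n \<ge> m" "u \<in> M n" "m \<ge> 1" "\<sigma> \<in> SymN m"
    unfolding eventually_sequentially by blast
  then have "n \<ge> 1" "\<sigma> \<in> SymN n" "u \<in> M n" using SymN_mono by auto
  then show ?thesis using act_M M_subset_Mu by blast
qed

lemma act_irreducibles_M:
  "n \<ge> 1 \<Longrightarrow> \<sigma> \<in> SymN n \<Longrightarrow> u \<in> irreducibles (M n) \<Longrightarrow> act \<sigma> u \<in> irreducibles (M n)"
  using act_irreducible[of \<sigma> "M n" u] SymN_bij SymN_inv act_M by blast

lemma act_irreducibles_Mu:
  "\<sigma> \<in> SymAll \<Longrightarrow> u \<in> irreducibles Mu \<Longrightarrow> act \<sigma> u \<in> irreducibles Mu"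
  using act_irreducible[of \<sigma> Mu u] SymAll_bij SymAll_inv act_Mu by blast

lemma irreducibles_M_antimono:
  "1 \<le> m \<Longrightarrow> m \<le> n \<Longrightarrow> u \<in> M m \<Longrightarrow> u \<in> irreducibles (M n) \<Longrightarrow> u \<in> irreducibles (M m)"
  using irreducible_in_subset M_mono by blast

lemma mem_irreducibles_Mu_iff:
  "u \<in> irreducibles Mu \<longleftrightarrow> (\<forall>\<^sub>F n in sequentially. u \<in> irreducibles (M n))"
proof
  assume u: "u \<in> irreducibles Mu"
  have "u \<in> Mu" using u irreducibles_subset by blast
  then have "\<forall>\<^sub>F n in sequentially. n \<ge> 1 \<and> u \<in> M n"
    using Mu_eventually_M by (auto intro: eventually_conj)
  then show "\<forall>\<^sub>F n in sequentially. u \<in> irreducibles (M n)"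
    by (rule eventually_mono) (use irreducible_in_subset[OF M_subset_Mu _ u] in blast)
next
  assume ev: "\<forall>\<^sub>F n in sequentially. u \<in> irreducibles (M n)"
  have "\<forall>\<^sub>F n in sequentially. n \<ge> 1 \<and> u \<in> irreducibles (M n)"
    using ev by (auto intro: eventually_conj)
  then obtain n where "n \<ge> 1" "u \<in> irreducibles (M n)" unfolding eventually_sequentially by blast
  then have "u \<in> Mu" "u \<noteq> (\<lambda>_. 0)"
    using M_subset_Mu irreducibles_subset unfolding irreducibles_def by blast+
  moreover have "v = (\<lambda>_. 0) \<or> w = (\<lambda>_. 0)" if "v \<in> Mu" "w \<in> Mu" "u = (\<lambda>x. v x + w x)" for v w
  proof -
    have "\<forall>\<^sub>F n in sequentially. {v, w} \<subseteq> M n"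
      using finite_subset_Mu_eventually_M[of "{v, w}"] that(1,2) by simp
    then have "\<forall>\<^sub>F n in sequentially. {v, w} \<subseteq> M n \<and> u \<in> irreducibles (M n)"
      using ev by (rule eventually_conj)
    then obtain n where "{v, w} \<subseteq> M n" "u \<in> irreducibles (M n)" unfolding eventually_sequentially by blast
    then show ?thesis using that(3) unfolding irreducibles_def by blast
  qed
  ultimately show "u \<in> irreducibles Mu" unfolding irreducibles_def by blast
qed

text \<open>An irreducible of M n stays irreducible in Mu: its summands have support inside its
  own, because all vectors are nonnegative, and hence lie in M n by saturation.\<close>
lemma irreducibles_M_eq_if_saturated:
  assumes "n \<ge> 1" "M n = Mu \<inter> ZIn d c n"
  shows "irreducibles (M n) = irreducibles Mu \<inter> ZIn d c n"
proof
  show "irreducibles Mu \<inter> ZIn d c n \<subseteq> irreducibles (M n)"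
    using irreducible_in_subset[of "M n" Mu] M_subset_Mu[OF assms(1)] assms(2) irreducibles_subset
    by blast
  show "irreducibles (M n) \<subseteq> irreducibles Mu \<inter> ZIn d c n"
  proof
    fix u assume u: "u \<in> irreducibles (M n)"
    have uZ: "u \<in> ZIn d c n" using u irreducibles_subset M_subset_ZIn[OF assms(1)] by blast
    have "v = (\<lambda>_. 0) \<or> w = (\<lambda>_. 0)" if vw: "v \<in> Mu" "w \<in> Mu" "u = (\<lambda>x. v x + w x)" for v w
    proof -
      have "supp v \<subseteq> supp u" "supp w \<subseteq> supp u"
        using vw positive_monoid_Mu supp_add_nonneg unfolding positive_monoid_def by auto
      then have "v \<in> M n" "w \<in> M n" using vw uZ assms(2) unfolding ZIn_def by auto
      then show ?thesis using u vw(3) unfolding irreducibles_def by blast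
    qed
    then have "u \<in> irreducibles Mu"
      using u M_subset_Mu[OF assms(1)] unfolding irreducibles_def by blast
    then show "u \<in> irreducibles Mu \<inter> ZIn d c n" using uZ by blast
  qed
qed

lemma equiv_hilbert_basis_n_iff:
  "n \<ge> 1 \<Longrightarrow> equiv_hilbert_basis_n n H (M n) \<longleftrightarrow>
     H \<subseteq> M n \<and> orbit_set (SymN n) H = irreducibles (M n)"
  unfolding equiv_hilbert_basis_n_def using hilbert_basis_iff_irreducibles[OF positive_monoid_M] by blast

lemma equiv_hilbert_basis_iff:
  "equiv_hilbert_basis H Mu \<longleftrightarrow> H \<subseteq> Mu \<and> orbit_set SymAll H = irreducibles Mu"
  unfolding equiv_hilbert_basis_def using hilbert_basis_iff_irreducibles[OF positive_monoid_Mu] by blast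

lemma stabilizes_if_equiv_hilbert_basis_eventually:
  assumes "p \<ge> 1" "finite H" "\<forall>n\<ge>p. equiv_hilbert_basis_n n H (M n)"
  shows "(\<exists>p\<ge>1. \<forall>m n. p \<le> m \<and> m \<le> n \<longrightarrow> M n = nncomb (orbit_set (SymN n) (M m)))
    \<and> (\<exists>N. \<forall>n\<ge>N. finitely_generated (M n))"
proof -
  have hb: "H \<subseteq> M n" "nncomb (orbit_set (SymN n) H) = M n" if "n \<ge> p" for n
    using assms(3) that unfolding equiv_hilbert_basis_n_def hilbert_basis_def by auto
  have "M n = nncomb (orbit_set (SymN n) (M m))" if "p \<le> m" "m \<le> n" for m n
  proof
    have "orbit_set (SymN n) (M m) \<subseteq> M n"
      using orbit_set_subset_M M_mono that assms(1) by simp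
    then show "nncomb (orbit_set (SymN n) (M m)) \<subseteq> M n"
      using nncomb_subset_monoid is_monoid_M that assms(1) by simp
    show "M n \<subseteq> nncomb (orbit_set (SymN n) (M m))"
      using hb(2)[of n] nncomb_mono[OF orbit_set_mono[OF hb(1)[of m]], of "SymN n"] that by simp
  qed
  moreover have "finitely_generated (M n)" if "n \<ge> p" for n
    unfolding finitely_generated_def
    using hb[OF that] finite_orbit_set[OF finite_SymN assms(2)] orbit_set_subset_M that assms(1)
    by (metis order_trans)
  ultimately show ?thesis using assms(1) by blast
qed

lemma irreducibles_subset_orbit_if_stabilizes:
  assumes "1 \<le> m" "m \<le> n" "M n = nncomb (orbit_set (SymN n) (M m))"
  shows "irreducibles (M n) \<subseteq> orbit_set (SymN n) (irreducibles (M m))"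
proof (rule irreducibles_subset_generators)
  have "irreducibles (M m) \<subseteq> M n" using irreducibles_subset M_mono[OF assms(1,2)] by blast
  then show "orbit_set (SymN n) (irreducibles (M m)) \<subseteq> M n"
    using orbit_set_subset_M assms(1,2) by simp
  have "M n = nncomb (orbit_set (SymN n) (nncomb (irreducibles (M m))))"
    using assms(3) nncomb_irreducibles[OF positive_monoid_M[OF assms(1)]] by simp
  then show "nncomb (orbit_set (SymN n) (irreducibles (M m))) = M n"
    by (simp add: nncomb_orbit_set_nncomb)
qed

text \<open>Elements of H may become reducible in later M n, but then never irreducible again,
  so the set of survivors decreases and eventually becomes constant.\<close>
lemma equiv_hilbert_basis_eventually_if_orbits_cover:
  assumes "m \<ge> 1" "finite H" "H \<subseteq> M m"
    and cover: "\<forall>n\<ge>m. irreducibles (M n) \<subseteq> orbit_set (SymN n) H"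
  shows "\<exists>p\<ge>1. \<exists>H. finite H \<and> (\<forall>n\<ge>p. equiv_hilbert_basis_n n H (M n))"
proof -
  have H_M: "H \<subseteq> M n" if "n \<ge> m" for n using assms(1,3) M_mono that by blast
  define S where "S n = H \<inter> irreducibles (M n)" for n
  have "\<forall>n\<ge>m. S n \<subseteq> H" unfolding S_def by blast
  moreover have "\<forall>k l. m \<le> k \<and> k \<le> l \<longrightarrow> S l \<subseteq> S k"
  proof (intro allI impI subsetI)
    fix k l h assume kl: "m \<le> k \<and> k \<le> l" and h: "h \<in> S l"
    then have "h \<in> M k" "k \<ge> 1" using H_M assms(1) unfolding S_def by auto
    then show "h \<in> S k" using irreducibles_M_antimono kl h unfolding S_def by blast
  qed
  ultimately obtain p where p: "p \<ge> m" "\<forall>n\<ge>p. S n = S p"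
    using antimono_stabilizes[OF assms(2)] by blast
  have "orbit_set (SymN n) (S p) = irreducibles (M n)" if n: "n \<ge> p" for n
  proof
    have "n \<ge> 1" "n \<ge> m" using n p assms(1) by auto
    show "orbit_set (SymN n) (S p) \<subseteq> irreducibles (M n)"
    proof
      fix v assume "v \<in> orbit_set (SymN n) (S p)"
      then obtain \<sigma> h where "v = act \<sigma> h" "\<sigma> \<in> SymN n" "h \<in> S n"
        using p(2) n unfolding orbit_set_def by blast
      then show "v \<in> irreducibles (M n)"
        using act_irreducibles_M[OF \<open>n \<ge> 1\<close>] unfolding S_def by blast
    qed
    show "irreducibles (M n) \<subseteq> orbit_set (SymN n) (S p)"
    proof
      fix u assume u: "u \<in> irreducibles (M n)"
      then obtain \<sigma> h where h: "u = act \<sigma> h" "\<sigma> \<in> SymN n" "h \<in> H"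
        using cover \<open>n \<ge> m\<close> unfolding orbit_set_def by blast
      then have "h = act (inv \<sigma>) u" using act_inv_act[OF SymN_bij[OF h(2)]] by simp
      then have "h \<in> S n"
        using h(3) act_irreducibles_M[OF \<open>n \<ge> 1\<close> SymN_inv[OF h(2)] u] unfolding S_def by simp
      then have "u = act \<sigma> h \<and> \<sigma> \<in> SymN n \<and> h \<in> S p" using h p(2) n by blast
      then show "u \<in> orbit_set (SymN n) (S p)" unfolding orbit_set_def by blast
    qed
  qed
  moreover have "S p \<subseteq> M n" if "n \<ge> p" for n
    using H_M[of n] p(1) that unfolding S_def by auto
  moreover have "finite (S p)" using assms(2) unfolding S_def by simp
  ultimately have "\<forall>n\<ge>p. equiv_hilbert_basis_n n (S p) (M n)"
    using equiv_hilbert_basis_n_iff p(1) assms(1) by (meson order_trans)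
  then show ?thesis using \<open>finite (S p)\<close> p(1) assms(1) by (intro exI[of _ p]) auto
qed

lemma equiv_hilbert_basis_eventually_if_stabilizes:
  assumes "p \<ge> 1" and stab: "\<forall>m n. p \<le> m \<and> m \<le> n \<longrightarrow> M n = nncomb (orbit_set (SymN n) (M m))"
    and fg: "\<forall>n\<ge>N. finitely_generated (M n)"
  shows "\<exists>p\<ge>1. \<exists>H. finite H \<and> (\<forall>n\<ge>p. equiv_hilbert_basis_n n H (M n))"
proof (rule equiv_hilbert_basis_eventually_if_orbits_cover)
  define m where "m = max p N"
  have "p \<le> m" "N \<le> m" "m \<ge> 1" using assms(1) unfolding m_def by auto
  then show "m \<ge> 1" by simp
  obtain F where F: "finite F" "F \<subseteq> M m" "nncomb F = M m"
    using fg \<open>N \<le> m\<close> unfolding finitely_generated_def by blast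
  show "finite (irreducibles (M m))"
    using finite_subset[OF irreducibles_subset_generators[OF F(2,3)] F(1)] .
  show "irreducibles (M m) \<subseteq> M m" by (rule irreducibles_subset)
  show "\<forall>n\<ge>m. irreducibles (M n) \<subseteq> orbit_set (SymN n) (irreducibles (M m))"
  proof (intro allI impI)
    fix n assume "m \<le> n"
    then show "irreducibles (M n) \<subseteq> orbit_set (SymN n) (irreducibles (M m))"
      using irreducibles_subset_orbit_if_stabilizes \<open>m \<ge> 1\<close> stab \<open>p \<le> m\<close> by blast
  qed
qed

lemma equiv_hilbert_basis_Mu_if_eventually:
  assumes "\<forall>n\<ge>p. equiv_hilbert_basis_n n H (M n)"
  shows "equiv_hilbert_basis H Mu"
proof -
  define q where "q = max p 1"
  have hb: "H \<subseteq> M n" "orbit_set (SymN n) H = irreducibles (M n)" if "n \<ge> q" for n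
    using assms equiv_hilbert_basis_n_iff that unfolding q_def by auto
  have "H \<subseteq> Mu" using hb(1)[of q] M_subset_Mu[of q] unfolding q_def by auto
  moreover have "orbit_set SymAll H = irreducibles Mu"
  proof (rule set_eqI)
    fix v
    have "\<forall>\<^sub>F n in sequentially. (v \<in> orbit_set (SymN n) H) = (v \<in> irreducibles (M n))"
      unfolding eventually_sequentially using hb(2) by (intro exI[of _ q] allI impI) simp
    then show "v \<in> orbit_set SymAll H \<longleftrightarrow> v \<in> irreducibles Mu"
      unfolding mem_orbit_set_SymAll_iff mem_irreducibles_Mu_iff by (rule eventually_subst)
  qed
  ultimately show ?thesis using equiv_hilbert_basis_iff by blast
qed

text \<open>Saturation: an element of Mu supported in I_n is a combination of translates of
  H supported in I_n, and those are already Sym(n)-translates.\<close>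
lemma eventually_saturated_if_equiv_hilbert_basis_Mu:
  assumes "finite H" "equiv_hilbert_basis H Mu"
  shows "\<forall>\<^sub>F n in sequentially. n \<ge> 1 \<and> H \<subseteq> M n \<and> M n = Mu \<inter> ZIn d c n
           \<and> irreducibles (M n) = orbit_set (SymN n) H"
proof -
  have H: "H \<subseteq> Mu" "orbit_set SymAll H = irreducibles Mu"
    using assms(2) equiv_hilbert_basis_iff by auto
  have ev: "\<forall>\<^sub>F n in sequentially. n \<ge> 1 \<and> H \<subseteq> M n"
    using finite_subset_Mu_eventually_M[OF assms(1) H(1)] by (auto intro: eventually_conj)
  have key: "n \<ge> 1 \<and> H \<subseteq> M n \<and> M n = Mu \<inter> ZIn d c n \<and> irreducibles (M n) = orbit_set (SymN n) H"
    if n: "n \<ge> 1" "H \<subseteq> M n" for n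
  proof -
    have HZ: "H \<subseteq> ZIn d c n" using n M_subset_ZIn by blast
    have orbit_n: "orbit_set (SymN n) H = irreducibles Mu \<inter> ZIn d c n"
      using orbit_set_SymN_eq[OF HZ] H(2) by simp
    have "Mu \<inter> ZIn d c n \<subseteq> M n"
    proof
      fix u assume u: "u \<in> Mu \<inter> ZIn d c n"
      have nonneg: "\<forall>a\<in>irreducibles Mu. \<forall>x. a x \<ge> 0"
        using positive_monoid_Mu irreducibles_subset unfolding positive_monoid_def by blast
      have "u \<in> nncomb (irreducibles Mu)"
        using u nncomb_irreducibles[OF positive_monoid_Mu] by blast
      then have "u \<in> nncomb {a \<in> irreducibles Mu. supp a \<subseteq> supp u}"
        using nncomb_restrict_supp[OF nonneg] by blast
      also have "{a \<in> irreducibles Mu. supp a \<subseteq> supp u} \<subseteq> orbit_set (SymN n) H"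
        using u orbit_n unfolding ZIn_def by auto
      then have "nncomb {a \<in> irreducibles Mu. supp a \<subseteq> supp u} \<subseteq> M n"
        using nncomb_subset_monoid[OF is_monoid_M[OF n(1)]] orbit_set_subset_M[OF n] by blast
      finally show "u \<in> M n" .
    qed
    then have sat: "M n = Mu \<inter> ZIn d c n" using M_subset_Mu M_subset_ZIn n(1) by blast
    then show ?thesis using irreducibles_M_eq_if_saturated[OF n(1) sat] orbit_n n by simp
  qed
  show ?thesis using ev by (rule eventually_mono) (use key in blast)
qed

lemma equiv_hilbert_basis_eventually_if_Mu:
  assumes "finite H" "equiv_hilbert_basis H Mu"
  shows "\<exists>p\<ge>1. \<exists>H. finite H \<and> (\<forall>n\<ge>p. equiv_hilbert_basis_n n H (M n))"
proof -
  obtain p where p: "\<forall>n\<ge>p. n \<ge> 1 \<and> H \<subseteq> M n \<and> M n = Mu \<inter> ZIn d c n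
      \<and> irreducibles (M n) = orbit_set (SymN n) H"
    using eventually_saturated_if_equiv_hilbert_basis_Mu[OF assms]
    unfolding eventually_sequentially by blast
  then have "\<forall>n\<ge>p. equiv_hilbert_basis_n n H (M n)"
    using equiv_hilbert_basis_n_iff by blast
  moreover have "p \<ge> 1" using p by blast
  ultimately show ?thesis using assms(1) by blast
qed

lemma saturated_bounded_support_if_equiv_hilbert_basis_Mu:
  assumes "finite H" "equiv_hilbert_basis H Mu"
  shows "\<exists>q\<ge>1. \<exists>q'\<ge>1. \<forall>n\<ge>q. M n = Mu \<inter> ZIn d c n
           \<and> (\<exists>B. finite B \<and> hilbert_basis B (M n) \<and> (\<forall>b\<in>B. card (supp b) \<le> q'))"
proof -
  obtain q where q: "\<forall>n\<ge>q. n \<ge> 1 \<and> H \<subseteq> M n \<and> M n = Mu \<inter> ZIn d c n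
      \<and> irreducibles (M n) = orbit_set (SymN n) H"
    using eventually_saturated_if_equiv_hilbert_basis_Mu[OF assms]
    unfolding eventually_sequentially by blast
  define q' where "q' = Max (insert 1 ((\<lambda>h. card (supp h)) ` H))"
  have q': "q' \<ge> 1" "\<forall>h\<in>H. card (supp h) \<le> q'" unfolding q'_def using assms(1) by auto
  have basis: "finite (irreducibles (M n)) \<and> hilbert_basis (irreducibles (M n)) (M n)
      \<and> (\<forall>b\<in>irreducibles (M n). card (supp b) \<le> q')" if "n \<ge> q" for n
  proof -
    have "n \<ge> 1" and irr: "irreducibles (M n) = orbit_set (SymN n) H" using q that by blast+
    have "finite (irreducibles (M n))" using irr finite_orbit_set[OF finite_SymN assms(1)] by simp
    moreover have "hilbert_basis (irreducibles (M n)) (M n)"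
      using hilbert_basis_iff_irreducibles[OF positive_monoid_M[OF \<open>n \<ge> 1\<close>]] by simp
    moreover have "card (supp b) \<le> q'" if b: "b \<in> irreducibles (M n)" for b
    proof -
      obtain \<sigma> h where "b = act \<sigma> h" "\<sigma> \<in> SymN n" "h \<in> H"
        using b irr unfolding orbit_set_def by blast
      then show ?thesis using card_supp_act[OF SymN_bij] q'(2) by simp
    qed
    ultimately show ?thesis by blast
  qed
  have "M n = Mu \<inter> ZIn d c n
      \<and> (\<exists>B. finite B \<and> hilbert_basis B (M n) \<and> (\<forall>b\<in>B. card (supp b) \<le> q'))" if "n \<ge> q" for n
    using q basis[OF that] that by blast
  moreover have "q \<ge> 1" using q by blast
  ultimately show ?thesis using q'(1) by blast
qed

text \<open>An irreducible of Mu has support of size at most q', hence a Sym-translate supported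
  in I_r for r = max q (d q'), that is, in M r.\<close>
lemma equiv_hilbert_basis_Mu_if_saturated_bounded_support:
  assumes "\<forall>n\<ge>q. M n = Mu \<inter> ZIn d c n
             \<and> (\<exists>B. finite B \<and> hilbert_basis B (M n) \<and> (\<forall>b\<in>B. card (supp b) \<le> q'))"
  shows "\<exists>H. finite H \<and> equiv_hilbert_basis H Mu"
proof -
  have sat: "M n = Mu \<inter> ZIn d c n" "finite (irreducibles (M n))"
    "\<forall>b\<in>irreducibles (M n). card (supp b) \<le> q'" if "n \<ge> max q 1" for n
    using assms that hilbert_basis_iff_irreducibles[OF positive_monoid_M, of n] by auto
  define r where "r = max (max q 1) (d * q')"
  have r: "r \<ge> max q 1" "d * q' \<le> r" unfolding r_def by auto
  define H where "H = irreducibles (M r)"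
  have H_eq: "H = irreducibles Mu \<inter> ZIn d c r"
    unfolding H_def using irreducibles_M_eq_if_saturated sat(1) r(1) by auto
  have "orbit_set SymAll H \<subseteq> irreducibles Mu"
    unfolding orbit_set_def H_eq using act_irreducibles_Mu by blast
  moreover have "irreducibles Mu \<subseteq> orbit_set SymAll H"
  proof
    fix u assume u: "u \<in> irreducibles Mu"
    have "\<forall>\<^sub>F n in sequentially. n \<ge> max q 1" by (rule eventually_ge_at_top)
    then have "\<forall>\<^sub>F n in sequentially. n \<ge> max q 1 \<and> u \<in> irreducibles (M n)"
      using u unfolding mem_irreducibles_Mu_iff by (rule eventually_conj)
    then obtain n where n: "n \<ge> max q 1" "u \<in> irreducibles (M n)"
      unfolding eventually_sequentially by blast
    then have uZ: "u \<in> ZIn d c n" using M_subset_ZIn irreducibles_subset by fastforce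
    have "d * card (supp u) \<le> r" using sat(3)[OF n(1)] n(2) r(2) by (meson le_trans mult_le_mono2)
    then obtain \<tau> where \<tau>: "\<tau> \<in> SymN (max n r)" "act \<tau> u \<in> ZIn d c r"
      using SymN_act_into_ZIn[OF uZ] by blast
    then have "\<tau> \<in> SymAll" using SymN_subset_SymAll by blast
    then have "act \<tau> u \<in> H" using H_eq act_irreducibles_Mu u \<tau>(2) by blast
    moreover have "u = act (inv \<tau>) (act \<tau> u)" using act_inv_act SymAll_bij \<open>\<tau> \<in> SymAll\<close> by metis
    ultimately show "u \<in> orbit_set SymAll H"
      using SymAll_inv[OF \<open>\<tau> \<in> SymAll\<close>] unfolding orbit_set_def by blast
  qed
  moreover have "finite H" using sat(2)[OF r(1)] unfolding H_def .
  moreover have "H \<subseteq> Mu" using H_eq irreducibles_subset by blast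
  ultimately show ?thesis using equiv_hilbert_basis_iff by blast
qed


lemma stabilizes_iff_equiv_hilbert_basis_eventually:
  "((\<exists>p\<ge>1. \<forall>m n. p \<le> m \<and> m \<le> n \<longrightarrow> M n = nncomb (orbit_set (SymN n) (M m)))
      \<and> (\<exists>N. \<forall>n\<ge>N. finitely_generated (M n)))
    \<longleftrightarrow> (\<exists>p\<ge>1. \<exists>H. finite H \<and> (\<forall>n\<ge>p. equiv_hilbert_basis_n n H (M n)))"
proof
  assume "(\<exists>p\<ge>1. \<forall>m n. p \<le> m \<and> m \<le> n \<longrightarrow> M n = nncomb (orbit_set (SymN n) (M m)))
      \<and> (\<exists>N. \<forall>n\<ge>N. finitely_generated (M n))"
  then obtain p N where "p \<ge> 1" "\<forall>m n. p \<le> m \<and> m \<le> n \<longrightarrow> M n = nncomb (orbit_set (SymN n) (M m))"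
      "\<forall>n\<ge>N. finitely_generated (M n)"
    by blast
  then show "\<exists>p\<ge>1. \<exists>H. finite H \<and> (\<forall>n\<ge>p. equiv_hilbert_basis_n n H (M n))"
    by (rule equiv_hilbert_basis_eventually_if_stabilizes)
next
  assume "\<exists>p\<ge>1. \<exists>H. finite H \<and> (\<forall>n\<ge>p. equiv_hilbert_basis_n n H (M n))"
  then obtain p H where "p \<ge> 1" "finite H" "\<forall>n\<ge>p. equiv_hilbert_basis_n n H (M n)" by blast
  then show "(\<exists>p\<ge>1. \<forall>m n. p \<le> m \<and> m \<le> n \<longrightarrow> M n = nncomb (orbit_set (SymN n) (M m)))
      \<and> (\<exists>N. \<forall>n\<ge>N. finitely_generated (M n))"
    by (rule stabilizes_if_equiv_hilbert_basis_eventually)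
qed

lemma equiv_hilbert_basis_eventually_iff_Mu:
  "(\<exists>p\<ge>1. \<exists>H. finite H \<and> (\<forall>n\<ge>p. equiv_hilbert_basis_n n H (M n)))
    \<longleftrightarrow> (\<exists>H. finite H \<and> equiv_hilbert_basis H Mu)"
proof
  assume "\<exists>p\<ge>1. \<exists>H. finite H \<and> (\<forall>n\<ge>p. equiv_hilbert_basis_n n H (M n))"
  then obtain p H where "finite H" "\<forall>n\<ge>p. equiv_hilbert_basis_n n H (M n)" by blast
  then show "\<exists>H. finite H \<and> equiv_hilbert_basis H Mu"
    using equiv_hilbert_basis_Mu_if_eventually by blast
next
  assume "\<exists>H. finite H \<and> equiv_hilbert_basis H Mu"
  then obtain H where "finite H" "equiv_hilbert_basis H Mu" by blast
  then show "\<exists>p\<ge>1. \<exists>H. finite H \<and> (\<forall>n\<ge>p. equiv_hilbert_basis_n n H (M n))"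
    by (rule equiv_hilbert_basis_eventually_if_Mu)
qed

lemma saturated_bounded_support_iff_equiv_hilbert_basis_Mu:
  "(\<exists>q\<ge>1. \<exists>q'\<ge>1. \<forall>n\<ge>q. M n = Mu \<inter> ZIn d c n
      \<and> (\<exists>B. finite B \<and> hilbert_basis B (M n) \<and> (\<forall>b\<in>B. card (supp b) \<le> q')))
    \<longleftrightarrow> (\<exists>H. finite H \<and> equiv_hilbert_basis H Mu)"
proof
  assume "\<exists>q\<ge>1. \<exists>q'\<ge>1. \<forall>n\<ge>q. M n = Mu \<inter> ZIn d c n
      \<and> (\<exists>B. finite B \<and> hilbert_basis B (M n) \<and> (\<forall>b\<in>B. card (supp b) \<le> q'))"
  then obtain q q' where "\<forall>n\<ge>q. M n = Mu \<inter> ZIn d c n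
      \<and> (\<exists>B. finite B \<and> hilbert_basis B (M n) \<and> (\<forall>b\<in>B. card (supp b) \<le> q'))"
    by blast
  then show "\<exists>H. finite H \<and> equiv_hilbert_basis H Mu"
    by (rule equiv_hilbert_basis_Mu_if_saturated_bounded_support)
next
  assume "\<exists>H. finite H \<and> equiv_hilbert_basis H Mu"
  then obtain H where "finite H" "equiv_hilbert_basis H Mu" by blast
  then show "\<exists>q\<ge>1. \<exists>q'\<ge>1. \<forall>n\<ge>q. M n = Mu \<inter> ZIn d c n
      \<and> (\<exists>B. finite B \<and> hilbert_basis B (M n) \<and> (\<forall>b\<in>B. card (supp b) \<le> q'))"
    by (rule saturated_bounded_support_if_equiv_hilbert_basis_Mu)
qed

end

theorem theorem3p14:
  fixes c d :: nat and M :: "nat \<Rightarrow> vec set"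
  assumes "c \<ge> 1" and "d \<ge> 1"
    and chain: "sym_inv_chain d c M"
    and nonneg: "\<forall>n\<ge>1. M n \<subseteq> ZIn_nonneg d c n"
  defines "Mu \<equiv> chain_union M"
  defines "cond_i \<equiv>
      (\<exists>p\<ge>1. \<forall>m n. p \<le> m \<and> m \<le> n \<longrightarrow> M n = nncomb (orbit_set (SymN n) (M m)))
      \<and> (\<exists>N. \<forall>n\<ge>N. finitely_generated (M n))"
  defines "cond_ii \<equiv>
      (\<exists>p\<ge>1. \<exists>H. finite H \<and> equiv_hilbert_basis_n p H (M p)
                 \<and> (\<forall>n\<ge>p. equiv_hilbert_basis_n n H (M n)))"
  defines "cond_iii \<equiv>
      (\<exists>q\<ge>1. \<exists>q'\<ge>1. \<forall>n\<ge>q. M n = Mu \<inter> ZIn d c n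
          \<and> (\<exists>H. finite H \<and> hilbert_basis H (M n) \<and> (\<forall>h\<in>H. card (supp h) \<le> q')))"
  defines "cond_iv \<equiv> (\<exists>H. finite H \<and> equiv_hilbert_basis H Mu)"
  shows "(cond_i \<longleftrightarrow> cond_ii) \<and> (cond_ii \<longleftrightarrow> cond_iii) \<and> (cond_iii \<longleftrightarrow> cond_iv)"
proof -
  interpret sym_chain d c M using chain nonneg by unfold_locales
  have ii: "cond_ii \<longleftrightarrow> (\<exists>p\<ge>1. \<exists>H. finite H \<and> (\<forall>n\<ge>p. equiv_hilbert_basis_n n H (M n)))"
    unfolding cond_ii_def by auto
  have "cond_i \<longleftrightarrow> cond_ii"
    unfolding cond_i_def ii by (rule stabilizes_iff_equiv_hilbert_basis_eventually)
  moreover have "cond_ii \<longleftrightarrow> cond_iv"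
    unfolding ii cond_iv_def Mu_def by (rule equiv_hilbert_basis_eventually_iff_Mu)
  moreover have "cond_iii \<longleftrightarrow> cond_iv"
    unfolding cond_iii_def cond_iv_def Mu_def
    by (rule saturated_bounded_support_iff_equiv_hilbert_basis_Mu)
  ultimately show ?thesis by blast
qed

end
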